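(* Let $C\subseteq B_k^n$. Then $C$ is a linear code over $B_k$ (i.e. a $B_k$-submodule of $B_k^n$) if and only if there exist linear codes $C_1,\dots,C_{2^k}$ of length $n$ over $\mathbb{F}_{p^r}$ (i.e. $\mathbb{F}_{p^r}$-subspaces of $\mathbb{F}_{p^r}^n$) such that $C=\overline{\Psi}_k^{-1}(C_1,\dots,C_{2^k})$.
   Context: Let $p$ be a prime, $r\ge 1$, $\mathbb{F}_{p^r}$ the field with $p^r$ elements, and for $k\ge1$ let $B_k=\mathbb{F}_{p^r}[v_1,\dots,v_k]/\langle v_i^2-v_i,\ v_iv_j-v_jv_i\rangle$. For $H\subseteq\{1,\dots,k\}$ put $v_H=\prod_{i\in H}v_i$ ($v_\emptyset=1$); every $a\in B_k$ can be written uniquely as $a=\sum_{H\subseteq\{1,\dots,k\}}\alpha_Hv_H$ with $\alpha_H\in\mathbb{F}_{p^r}$. Fix an enumeration $H_1,\dots,H_{2^k}$ of the subsets of $\{1,\dots,k\}$ and define $\Psi_k:B_k\to\mathbb{F}_{p^r}^{2^k}$ by $\Psi_k(a)=\big(\sum_{H\subseteq H_1}\alpha_H,\ \sum_{H\subseteq H_2}\alpha_H,\dots,\sum_{H\subseteq H_{2^k}}\alpha_H\big)$ (a bijection). For $\mathbf a=(a_1,\dots,a_n)\in B_k^n$ let $\overline{\Psi}_k(\mathbf a)=(\Psi_k(a_1),\dots,\Psi_k(a_n))$. For subsets $C_1,\dots,C_{2^k}\subseteq\mathbb{F}_{p^r}^n$, $\overline{\Psi}_k^{-1}(C_1,\dots,C_{2^k})$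 denotes the set of all $\mathbf a=(a_1,\dots,a_n)\in B_k^n$ such that for every $j\in\{1,\dots,2^k\}$ the vector $\big(\Psi_k(a_1)_j,\dots,\Psi_k(a_n)_j\big)$ of $j$-th components lies in $C_j$. *)

theory Defs
  imports Main "HOL-Computational_Algebra.Primes"
begin

text \<open>Elements of B_k = F[v_1..v_k]/<v_i^2 - v_i, v_i v_j - v_j v_i> are represented by their
  unique coefficient families (alpha_H), H ranging over subsets of {1..k}; coefficients
  outside Pow {1..k} are zero.\<close>

definition Bk :: "nat \<Rightarrow> (nat set \<Rightarrow> 'a::field) set" where
  "Bk k = {a. \<forall>H. \<not> H \<subseteq> {1..k} \<longrightarrow> a H = 0}"

text \<open>Multiplication in B_k: v_H * v_K = v_(H union K).\<close>
definition bmul :: "nat \<Rightarrow> (nat set \<Rightarrow> 'a::field) \<Rightarrow> (nat set \<Rightarrow> 'a) \<Rightarrow> (nat set \<Rightarrow> 'a)" where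
  "bmul k a b = (\<lambda>G. \<Sum>HK\<in>{(H, K). H \<subseteq> {1..k} \<and> K \<subseteq> {1..k} \<and> H \<union> K = G}.
                        a (fst HK) * b (snd HK))"

definition Bvec :: "nat \<Rightarrow> nat \<Rightarrow> (nat \<Rightarrow> nat set \<Rightarrow> 'a::field) set" where
  "Bvec k n = {x. (\<forall>i<n. x i \<in> Bk k) \<and> (\<forall>i\<ge>n. x i = (\<lambda>_. 0))}"

definition B_linear_code :: "nat \<Rightarrow> nat \<Rightarrow> (nat \<Rightarrow> nat set \<Rightarrow> 'a::field) set \<Rightarrow> bool" where
  "B_linear_code k n C \<longleftrightarrow>
     C \<subseteq> Bvec k n \<and> (\<lambda>_ _. 0) \<in> C \<and>
     (\<forall>x\<in>C. \<forall>y\<in>C. (\<lambda>i H. x i H + y i H) \<in> C) \<and>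
     (\<forall>a\<in>Bk k. \<forall>x\<in>C. (\<lambda>i. if i < n then bmul k a (x i) else (\<lambda>_. 0)) \<in> C)"

definition Fvec :: "nat \<Rightarrow> (nat \<Rightarrow> 'a::field) set" where
  "Fvec n = {x. \<forall>i\<ge>n. x i = 0}"

definition F_linear_code :: "nat \<Rightarrow> (nat \<Rightarrow> 'a::field) set \<Rightarrow> bool" where
  "F_linear_code n D \<longleftrightarrow>
     D \<subseteq> Fvec n \<and> (\<lambda>_. 0) \<in> D \<and>
     (\<forall>x\<in>D. \<forall>y\<in>D. (\<lambda>i. x i + y i) \<in> D) \<and>
     (\<forall>c. \<forall>x\<in>D. (\<lambda>i. c * x i) \<in> D)"

definition Psi :: "(nat \<Rightarrow> nat set) \<Rightarrow> (nat set \<Rightarrow> 'a::field) \<Rightarrow> nat \<Rightarrow> 'a" where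
  "Psi enum a j = (\<Sum>H\<in>Pow (enum j). a H)"

definition Psibar_inv :: "nat \<Rightarrow> (nat \<Rightarrow> nat set) \<Rightarrow> nat \<Rightarrow> (nat \<Rightarrow> (nat \<Rightarrow> 'a::field) set)
      \<Rightarrow> (nat \<Rightarrow> nat set \<Rightarrow> 'a) set" where
  "Psibar_inv k enum n Cs =
     {x \<in> Bvec k n. \<forall>j\<in>{1..2^k}. (\<lambda>i. if i < n then Psi enum (x i) j else 0) \<in> Cs j}"

end

theory Submission
  imports Defs
begin

text \<open>The coordinates of \<open>\<Psi>\<^sub>k(a)\<close> are the values of the zeta transform
  \<open>T \<mapsto> \<Sum>H\<subseteq>T. \<alpha>\<^sub>H\<close> of the coefficients of \<open>a\<close>. Since \<open>v\<^sub>H v\<^sub>K = v\<^bsub>H\<union>K\<^esub>\<close>, this transform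
  turns products into pointwise products, and by Moebius inversion it is bijective, so \<open>\<Psi>\<^sub>k\<close>
  is a ring isomorphism from \<open>B\<^sub>k\<close> onto \<open>F\<close> to the power \<open>2\<^sup>k\<close>. Multiplication by \<open>a\<close> therefore acts
  on the \<open>j\<close>-th coordinate as the scalar \<open>\<Psi>\<^sub>k(a)\<^sub>j\<close>, which makes every preimage of linear codes a
  submodule. Conversely, a submodule \<open>C\<close> is the preimage of its coordinate codes: if the
  \<open>j\<close>-th coordinates of \<open>x\<close> agree with those of \<open>c\<^sub>j \<in> C\<close> for every \<open>j\<close>, then \<open>x = \<Sum>\<^sub>j e\<^sub>j c\<^sub>j \<in> C\<close>
  for the primitive idempotents \<open>e\<^sub>j\<close>, whose images are the unit vectors.\<close>

definition zeta :: "(nat set \<Rightarrow> 'a::field) \<Rightarrow> nat set \<Rightarrow> 'a" where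
  "zeta a T = (\<Sum>H\<in>Pow T. a H)"

lemma Psi_eq_zeta: "Psi enum a j = zeta a (enum j)"
  by (simp add: Psi_def zeta_def)

lemma zeta_add: "zeta (\<lambda>H. a H + b H) T = zeta a T + zeta b T"
  by (simp add: zeta_def sum.distrib)

lemma zeta_sum: "zeta (\<lambda>H. \<Sum>l\<in>L. f l H) T = (\<Sum>l\<in>L. zeta (f l) T)"
  unfolding zeta_def by (rule sum.swap)

lemma zeta_const:
  assumes "finite T"
  shows "zeta (\<lambda>H. if H = {} then c else 0) T = c"
  using assms by (simp add: zeta_def)

lemma zeta_bmul:
  assumes T: "T \<subseteq> {1..k}"
  shows "zeta (bmul k a b) T = zeta a T * zeta b T"
proof -
  have fin: "finite T" using T finite_subset by blast
  have pairs: "{(H, K). H \<subseteq> {1..k} \<and> K \<subseteq> {1..k} \<and> H \<union> K = G} =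
               {HK \<in> Pow T \<times> Pow T. (\<lambda>(H, K). H \<union> K) HK = G}" if "G \<in> Pow T" for G
    using that T by auto
  have "zeta (bmul k a b) T =
        (\<Sum>G\<in>Pow T. \<Sum>HK\<in>{HK \<in> Pow T \<times> Pow T. (\<lambda>(H, K). H \<union> K) HK = G}. a (fst HK) * b (snd HK))"
    unfolding zeta_def bmul_def by (intro sum.cong refl) (simp only: pairs)
  also have "\<dots> = (\<Sum>HK\<in>Pow T \<times> Pow T. a (fst HK) * b (snd HK))"
    by (rule sum.group) (use fin in auto)
  also have "\<dots> = zeta a T * zeta b T"
    by (simp add: zeta_def sum.cartesian_product sum_product case_prod_beta)
  finally show ?thesis .
qed

lemma bmul_in_Bk: "bmul k a b \<in> Bk k"
  unfolding Bk_def
proof (intro CollectI allI impI)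
  fix G assume "\<not> G \<subseteq> {1..k}"
  then have "{(H, K). H \<subseteq> {1..k} \<and> K \<subseteq> {1..k} \<and> H \<union> K = G} = {}" by auto
  then show "bmul k a b G = 0" unfolding bmul_def by (simp only: sum.empty)
qed

lemma zeta_eqI:
  assumes "a \<in> Bk k" and "b \<in> Bk k" and eq: "\<And>T. T \<subseteq> {1..k} \<Longrightarrow> zeta a T = zeta b T"
  shows "a = b"
proof
  fix S
  show "a S = b S"
  proof (cases "S \<subseteq> {1..k}")
    case True
    define d where "d H = a H - b H" for H
    have fin: "finite S" using True finite_subset by blast
    have "d S = (\<Sum>T\<in>Pow S. (-1) ^ (card S - card T) * zeta d T)"
      by (rule inclusion_exclusion_mobius) (simp_all add: zeta_def fin)
    also have "\<dots> = 0"
      using True eq by (intro sum.neutral) (auto simp: zeta_def d_def sum_subtractf)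
    finally show ?thesis by (simp add: d_def)
  next
    case False
    then show ?thesis using assms(1,2) by (simp add: Bk_def)
  qed
qed

lemma zeta_surj: "\<exists>a\<in>Bk k. \<forall>T\<subseteq>{1..k}. zeta a T = f T"
proof -
  define g where "g S = (\<Sum>T\<in>Pow S. (-1) ^ card T * f T)" for S
  define a where "a H = (if H \<subseteq> {1..k} then (-1) ^ card H * g H else 0)" for H
  have "zeta a T = f T" if T: "T \<subseteq> {1..k}" for T
  proof -
    have fin: "finite T" using T finite_subset by blast
    have "f T = (\<Sum>U\<in>Pow T. (-1) ^ card U * g U)"
      by (rule inclusion_exclusion_symmetric[OF _ fin]) (simp add: g_def)
    also have "\<dots> = zeta a T"
      unfolding zeta_def using T by (intro sum.cong) (auto simp: a_def)
    finally show ?thesis by simp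
  qed
  moreover have "a \<in> Bk k" by (simp add: Bk_def a_def)
  ultimately show ?thesis by blast
qed

definition bscale :: "nat \<Rightarrow> nat \<Rightarrow> (nat set \<Rightarrow> 'a::field) \<Rightarrow> (nat \<Rightarrow> nat set \<Rightarrow> 'a)
      \<Rightarrow> nat \<Rightarrow> nat set \<Rightarrow> 'a" where
  "bscale k n a x = (\<lambda>i. if i < n then bmul k a (x i) else (\<lambda>_. 0))"

definition Psi_vec :: "(nat \<Rightarrow> nat set) \<Rightarrow> nat \<Rightarrow> (nat \<Rightarrow> nat set \<Rightarrow> 'a::field) \<Rightarrow> nat \<Rightarrow> nat \<Rightarrow> 'a" where
  "Psi_vec enum n x j = (\<lambda>i. if i < n then Psi enum (x i) j else 0)"

lemma B_linear_code_iff: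
  "B_linear_code k n C \<longleftrightarrow>
     C \<subseteq> Bvec k n \<and> (\<lambda>_ _. 0) \<in> C \<and>
     (\<forall>x\<in>C. \<forall>y\<in>C. (\<lambda>i H. x i H + y i H) \<in> C) \<and>
     (\<forall>a\<in>Bk k. \<forall>x\<in>C. bscale k n a x \<in> C)"
  unfolding B_linear_code_def bscale_def ..

lemma Psibar_inv_eq:
  "Psibar_inv k enum n Cs = {x \<in> Bvec k n. \<forall>j\<in>{1..2^k}. Psi_vec enum n x j \<in> Cs j}"
  unfolding Psibar_inv_def Psi_vec_def ..

lemma Psi_vec_zero: "Psi_vec enum n (\<lambda>_ _. 0) j = (\<lambda>_. 0)"
  unfolding Psi_vec_def by (rule ext) (simp add: Psi_def)

lemma Psi_vec_add:
  "Psi_vec enum n (\<lambda>i H. x i H + y i H) j = (\<lambda>i. Psi_vec enum n x j i + Psi_vec enum n y j i)"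
  by (auto simp: Psi_vec_def Psi_eq_zeta zeta_add)

lemma Psi_vec_sum:
  "Psi_vec enum n (\<lambda>i H. \<Sum>l\<in>L. f l i H) j = (\<lambda>i. \<Sum>l\<in>L. Psi_vec enum n (f l) j i)"
  by (auto simp: Psi_vec_def Psi_eq_zeta zeta_sum)

lemma Psi_vec_bscale:
  assumes "enum j \<subseteq> {1..k}"
  shows "Psi_vec enum n (bscale k n a x) j = (\<lambda>i. zeta a (enum j) * Psi_vec enum n x j i)"
  by (auto simp: Psi_vec_def bscale_def Psi_eq_zeta zeta_bmul[OF assms])

lemma Bvec_eqI:
  assumes bij: "bij_betw enum {1..2^k} (Pow {1..k})"
    and x: "x \<in> Bvec k n" and y: "y \<in> Bvec k n"
    and eq: "\<And>j. j \<in> {1..2^k} \<Longrightarrow> Psi_vec enum n x j = Psi_vec enum n y j"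
  shows "x = y"
proof
  fix i
  show "x i = y i"
  proof (cases "i < n")
    case True
    show ?thesis
    proof (rule zeta_eqI)
      show "x i \<in> Bk k" "y i \<in> Bk k" using x y True by (simp_all add: Bvec_def)
    next
      fix T assume "T \<subseteq> {1..k}"
      then obtain j where "j \<in> {1..2^k}" "enum j = T"
        using bij unfolding bij_betw_def by (metis Pow_iff imageE)
      then show "zeta (x i) T = zeta (y i) T"
        using fun_cong[OF eq, of j i] True by (simp add: Psi_vec_def Psi_eq_zeta)
    qed
  next
    case False
    then show ?thesis using x y by (simp add: Bvec_def)
  qed
qed

lemma bscale_in_Bvec: "bscale k n a x \<in> Bvec k n"
  by (simp add: Bvec_def bscale_def bmul_in_Bk)

lemma B_linear_code_sum:
  assumes C: "B_linear_code k n C" and "finite L" and "\<And>l. l \<in> L \<Longrightarrow> f l \<in> C"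
  shows "(\<lambda>i H. \<Sum>l\<in>L. f l i H) \<in> C"
  using assms(2,3)
proof (induction L rule: finite_induct)
  case empty
  then show ?case using C by (simp add: B_linear_code_def)
next
  case (insert l L)
  have "\<forall>x\<in>C. \<forall>y\<in>C. (\<lambda>i H. x i H + y i H) \<in> C"
    using C by (simp add: B_linear_code_def)
  then have "(\<lambda>i H. f l i H + (\<Sum>l\<in>L. f l i H)) \<in> C"
    using insert.IH insert.prems by simp
  then show ?case using insert.hyps by simp
qed

lemma F_linear_code_Psi_vec_image:
  assumes C: "B_linear_code k n C" and j: "enum j \<subseteq> {1..k}"
  shows "F_linear_code n ((\<lambda>x. Psi_vec enum n x j) ` C)"
  unfolding F_linear_code_def
proof (intro conjI ballI allI)
  show "(\<lambda>x. Psi_vec enum n x j) ` C \<subseteq> Fvec n"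
    by (auto simp: Fvec_def Psi_vec_def)
  have "(\<lambda>_ _. 0) \<in> C" using C by (simp add: B_linear_code_def)
  then show "(\<lambda>_. 0) \<in> (\<lambda>x. Psi_vec enum n x j) ` C"
    by (rule image_eqI[rotated]) (simp add: Psi_vec_zero)
next
  fix u v assume "u \<in> (\<lambda>x. Psi_vec enum n x j) ` C" "v \<in> (\<lambda>x. Psi_vec enum n x j) ` C"
  then obtain x y where x: "x \<in> C" "u = Psi_vec enum n x j" and y: "y \<in> C" "v = Psi_vec enum n y j"
    by blast
  have "(\<lambda>i H. x i H + y i H) \<in> C"
    using C x(1) y(1) by (simp add: B_linear_code_def)
  then show "(\<lambda>i. u i + v i) \<in> (\<lambda>x. Psi_vec enum n x j) ` C"
    by (rule image_eqI[rotated]) (simp only: x(2) y(2) Psi_vec_add)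
next
  fix c :: 'a and u assume "u \<in> (\<lambda>x. Psi_vec enum n x j) ` C"
  then obtain x where x: "x \<in> C" "u = Psi_vec enum n x j" by blast
  define a where "a H = (if H = {} then c else 0)" for H :: "nat set"
  have "a \<in> Bk k" by (simp add: Bk_def a_def)
  then have "bscale k n a x \<in> C" using C x(1) by (simp add: B_linear_code_iff)
  moreover have "zeta a (enum j) = c"
    unfolding a_def by (rule zeta_const) (use j finite_subset in blast)
  then have "(\<lambda>i. c * u i) = Psi_vec enum n (bscale k n a x) j"
    using Psi_vec_bscale[where enum = enum and j = j, OF j, of n a x] x(2) by simp
  ultimately show "(\<lambda>i. c * u i) \<in> (\<lambda>x. Psi_vec enum n x j) ` C"
    by (metis image_eqI)
qed

lemma Psi_vec_idempotent_sum:
  assumes bij: "bij_betw enum {1..2^k} (Pow {1..k})"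
    and e: "\<And>j T. T \<subseteq> {1..k} \<Longrightarrow> zeta (e j) T = (if T = enum j then 1 else 0)"
    and j0: "j0 \<in> {1..2^k}"
  shows "Psi_vec enum n (\<lambda>i H. \<Sum>j\<in>{1..2^k}. bscale k n (e j) (c j) i H) j0 = Psi_vec enum n (c j0) j0"
proof
  fix i
  have enum_j0: "enum j0 \<subseteq> {1..k}"
    using bij j0 by (auto simp: bij_betw_def)
  have delta: "zeta (e j) (enum j0) = (if j = j0 then 1 else 0)" if "j \<in> {1..2^k}" for j
    using e[OF enum_j0] bij j0 that by (auto simp: bij_betw_def inj_on_def)
  have "Psi_vec enum n (\<lambda>i H. \<Sum>j\<in>{1..2^k}. bscale k n (e j) (c j) i H) j0 i =
        (\<Sum>j\<in>{1..2^k}. zeta (e j) (enum j0) * Psi_vec enum n (c j) j0 i)"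
    by (simp add: Psi_vec_sum Psi_vec_bscale[where enum = enum and j = j0, OF enum_j0])
  also have "\<dots> = (\<Sum>j\<in>{1..2^k}. if j = j0 then Psi_vec enum n (c j) j0 i else 0)"
    by (rule sum.cong) (simp_all add: delta)
  also have "\<dots> = Psi_vec enum n (c j0) j0 i"
    using j0 by simp
  finally show "Psi_vec enum n (\<lambda>i H. \<Sum>j\<in>{1..2^k}. bscale k n (e j) (c j) i H) j0 i =
                Psi_vec enum n (c j0) j0 i" .
qed

lemma Psibar_inv_Psi_vec_image:
  assumes C: "B_linear_code k n C" and bij: "bij_betw enum {1..2^k} (Pow {1..k})"
  shows "C = Psibar_inv k enum n (\<lambda>j. (\<lambda>x. Psi_vec enum n x j) ` C)"
    (is "C = Psibar_inv k enum n ?Cs")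
proof
  show "C \<subseteq> Psibar_inv k enum n ?Cs"
    using C by (auto simp: Psibar_inv_eq B_linear_code_def)
next
  show "Psibar_inv k enum n ?Cs \<subseteq> C"
  proof
    fix x assume "x \<in> Psibar_inv k enum n ?Cs"
    then have xB: "x \<in> Bvec k n" and "\<forall>j\<in>{1..2^k}. \<exists>c\<in>C. Psi_vec enum n x j = Psi_vec enum n c j"
      by (auto simp: Psibar_inv_eq)
    then obtain c where c: "\<And>j. j \<in> {1..2^k} \<Longrightarrow> c j \<in> C \<and> Psi_vec enum n x j = Psi_vec enum n (c j) j"
      by metis
    have "\<exists>e\<in>Bk k. \<forall>T\<subseteq>{1..k}. zeta e T = (if T = enum j then 1 else (0::'a))" for j
      by (rule zeta_surj)
    then obtain e :: "nat \<Rightarrow> nat set \<Rightarrow> 'a" where e: "\<And>j. e j \<in> Bk k"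
      and e_delta: "\<And>j T. T \<subseteq> {1..k} \<Longrightarrow> zeta (e j) T = (if T = enum j then 1 else 0)"
      by metis
    define y where "y = (\<lambda>i H. \<Sum>j\<in>{1..2^k}. bscale k n (e j) (c j) i H)"
    have "y \<in> C"
      unfolding y_def using C e c by (intro B_linear_code_sum) (auto simp: B_linear_code_iff)
    moreover have "x = y"
    proof (rule Bvec_eqI[OF bij xB])
      show "y \<in> Bvec k n" using \<open>y \<in> C\<close> C by (auto simp: B_linear_code_def)
    next
      fix j0 :: nat assume "j0 \<in> {1..2^k}"
      then show "Psi_vec enum n x j0 = Psi_vec enum n y j0"
        unfolding y_def using Psi_vec_idempotent_sum[OF bij e_delta] c by simp
    qed
    ultimately show "x \<in> C" by simp
  qed
qed

lemma B_linear_code_Psibar_inv: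
  assumes enum_sub: "\<And>j. j \<in> {1..2^k} \<Longrightarrow> enum j \<subseteq> {1..k}"
    and Cs: "\<And>j. j \<in> {1..2^k} \<Longrightarrow> F_linear_code n (Cs j)"
  shows "B_linear_code k n (Psibar_inv k enum n Cs)"
proof -
  have zero: "(\<lambda>_. 0) \<in> Cs j"
    and add: "u \<in> Cs j \<Longrightarrow> v \<in> Cs j \<Longrightarrow> (\<lambda>i. u i + v i) \<in> Cs j"
    and scale: "u \<in> Cs j \<Longrightarrow> (\<lambda>i. c * u i) \<in> Cs j" if "j \<in> {1..2^k}" for j u v c
    using Cs[OF that] by (auto simp: F_linear_code_def)
  show ?thesis
    unfolding B_linear_code_iff
  proof (intro conjI ballI)
    show "Psibar_inv k enum n Cs \<subseteq> Bvec k n"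
      by (auto simp: Psibar_inv_eq)
    show "(\<lambda>_ _. 0) \<in> Psibar_inv k enum n Cs"
      by (simp add: Psibar_inv_eq Bvec_def Bk_def Psi_vec_zero zero)
  next
    fix x y assume x: "x \<in> Psibar_inv k enum n Cs" and y: "y \<in> Psibar_inv k enum n Cs"
    have "(\<lambda>i H. x i H + y i H) \<in> Bvec k n"
      using x y by (simp add: Psibar_inv_eq Bvec_def Bk_def)
    moreover have "Psi_vec enum n (\<lambda>i H. x i H + y i H) j \<in> Cs j" if "j \<in> {1..2^k}" for j
      unfolding Psi_vec_add using x y that by (simp add: Psibar_inv_eq add)
    ultimately show "(\<lambda>i H. x i H + y i H) \<in> Psibar_inv k enum n Cs"
      by (simp add: Psibar_inv_eq)
  next
    fix a x assume x: "x \<in> Psibar_inv k enum n Cs"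
    have "Psi_vec enum n (bscale k n a x) j \<in> Cs j" if j: "j \<in> {1..2^k}" for j
      unfolding Psi_vec_bscale[where enum = enum and j = j, OF enum_sub[OF j]]
      using x j by (simp add: Psibar_inv_eq scale)
    then show "bscale k n a x \<in> Psibar_inv k enum n Cs"
      by (simp add: Psibar_inv_eq bscale_in_Bvec)
  qed
qed

theorem lemma4p4:
  fixes C :: "(nat \<Rightarrow> nat set \<Rightarrow> 'a::{field,finite}) set"
    and p r k n :: nat and enum :: "nat \<Rightarrow> nat set"
  assumes "prime p" and "r \<ge> 1" and "card (UNIV :: 'a set) = p ^ r" and "k \<ge> 1"
    and "bij_betw enum {1..2^k} (Pow {1..k})"
    and "C \<subseteq> Bvec k n"
  shows "B_linear_code k n C \<longleftrightarrow>
         (\<exists>Cs :: nat \<Rightarrow> (nat \<Rightarrow> 'a) set.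
            (\<forall>j\<in>{1..2^k}. F_linear_code n (Cs j)) \<and> C = Psibar_inv k enum n Cs)"
proof -
  have enum_sub: "enum j \<subseteq> {1..k}" if "j \<in> {1..2^k}" for j
    using assms(5) that by (auto simp: bij_betw_def)
  show ?thesis
  proof
    assume C: "B_linear_code k n C"
    show "\<exists>Cs. (\<forall>j\<in>{1..2^k}. F_linear_code n (Cs j)) \<and> C = Psibar_inv k enum n Cs"
    proof (intro exI conjI ballI)
      show "F_linear_code n ((\<lambda>x. Psi_vec enum n x j) ` C)" if "j \<in> {1..2^k}" for j
        using C enum_sub[OF that] by (rule F_linear_code_Psi_vec_image)
      show "C = Psibar_inv k enum n (\<lambda>j. (\<lambda>x. Psi_vec enum n x j) ` C)"
        using C assms(5) by (rule Psibar_inv_Psi_vec_image)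
    qed
  next
    assume "\<exists>Cs. (\<forall>j\<in>{1..2^k}. F_linear_code n (Cs j)) \<and> C = Psibar_inv k enum n Cs"
    then obtain Cs where "\<And>j. j \<in> {1..2^k} \<Longrightarrow> F_linear_code n (Cs j)"
      and "C = Psibar_inv k enum n Cs"
      by blast
    then show "B_linear_code k n C"
      using B_linear_code_Psibar_inv enum_sub by blast
  qed
qed

end
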